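(* The multi-resolution LCMM is arbitrage-free: for every $\boldsymbol\theta\in\mathbb R^{\mathcal Z^*}$ and every $\boldsymbol\eta^\star\in\mathbb R^{\mathcal Y^*}$ minimizing $\boldsymbol\eta\mapsto\tilde C(\boldsymbol\theta+\mathbf A\boldsymbol\eta)$, the price vector $\boldsymbol p(\boldsymbol\theta)=\nabla\tilde C(\boldsymbol\theta+\mathbf A\boldsymbol\eta^\star)$ satisfies $\mathbf A^\top\boldsymbol p(\boldsymbol\theta)=\mathbf 0$ and lies in the coherent price space $\mathcal M=\mathrm{conv}\{\boldsymbol\phi(\omega):\omega\in\Omega\}$.
   Context: Fix an integer $K\ge1$, $N=2^K$, $\Omega=\{j/N:j=0,\dots,N-1\}$. Let $T^*$ be the complete binary tree of depth $K$ whose nodes are intervals: the root (level $0$) has $I_{\mathit{root}}=[0,1)$, and each node $z$ at level $k<K$ with $I_z=[\alpha_z,\beta_z)$ has children $\mathrm{left}(z)$, $\mathrm{right}(z)$ at level $k+1$ with intervals $[\alpha_z,\frac{\alpha_z+\beta_z}2)$ and $[\frac{\alpha_z+\beta_z}2,\beta_z)$. Let $\mathcal Z^*$ be its node set, $\mathcal Z_k$ the nodes at level $k$, $\mathrm{level}(z)$ the level of $z$, and $\mathcal Y^*=\mathcal Z^*\setminus\mathcal Z_K$ the inner nodes. Each node $z$ indexes an interval security with payoff $\phi_z(\omega)=1\{\omega\in I_z\}$; $\boldsymbol\phi(\omega)=(\phi_z(\omega))_{z\in\mathcal Z^*}$. Fix liquidity parameters $b_k>0$ for $k=0,\dots,K$,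 and set $B_\ell=\sum_{k=\ell+1}^K b_k$ for $\ell=-1,0,\dots,K$. For $\boldsymbol\theta\in\mathbb R^{\mathcal Z^*}$ write $\boldsymbol\theta_k$ for its restriction to $\mathcal Z_k$, let $C_k(\boldsymbol\theta_k)=b_k\log\sum_{z\in\mathcal Z_k}e^{\theta_z/b_k}$, and let $\tilde C(\boldsymbol\theta)=\sum_{k=0}^K C_k(\boldsymbol\theta_k)$ (direct-sum cost). The constraint matrix $\mathbf A\in\mathbb R^{\mathcal Z^*\times\mathcal Y^*}$ has entries $A_{zy}=B_{\mathrm{level}(z)}$ if $z=y$, $A_{zy}=-b_{\mathrm{level}(z)}$ if $I_z\subsetneq I_y$, and $0$ otherwise. The multi-resolution LCMM has cost function $C(\boldsymbol\theta)=\inf_{\boldsymbol\eta\in\mathbb R^{\mathcal Y^*}}\tilde C(\boldsymbol\theta+\mathbf A\boldsymbol\eta)$. *)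

theory Defs
  imports "HOL-Analysis.Analysis"
begin

text \<open>Nodes of the complete binary tree T* of depth K are encoded as pairs (k, j):
  level k, position j < 2^k, with interval [j/2^k, (j+1)/2^k).  The root is (0,0) with
  interval [0,1), and node (k,j) has children (k+1,2j) and (k+1,2j+1), i.e. the left and
  right halves of its interval.\<close>

type_synonym node = "nat \<times> nat"

definition level :: "node \<Rightarrow> nat" where
  "level z = fst z"

definition alpha :: "node \<Rightarrow> real" where
  "alpha z = real (snd z) / 2 ^ fst z"

definition beta :: "node \<Rightarrow> real" where
  "beta z = (real (snd z) + 1) / 2 ^ fst z"

definition interval :: "node \<Rightarrow> real set" where
  "interval z = {alpha z ..< beta z}"

definition nodes :: "nat \<Rightarrow> node set" where
  "nodes K = {(k, j). k \<le> K \<and> j < 2 ^ k}"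

definition level_nodes :: "nat \<Rightarrow> nat \<Rightarrow> node set" where
  "level_nodes K k = {z \<in> nodes K. level z = k}"

definition inner_nodes :: "nat \<Rightarrow> node set" where
  "inner_nodes K = nodes K - level_nodes K K"

definition outcomes :: "nat \<Rightarrow> real set" where
  "outcomes K = {real j / 2 ^ K | j. j < 2 ^ K}"

definition phi :: "node \<Rightarrow> real \<Rightarrow> real" where
  "phi z \<omega> = (if \<omega> \<in> interval z then 1 else 0)"

definition Bsum :: "nat \<Rightarrow> (nat \<Rightarrow> real) \<Rightarrow> nat \<Rightarrow> real" where
  "Bsum K b l = (\<Sum>k\<in>{l+1..K}. b k)"

definition Ck :: "nat \<Rightarrow> (nat \<Rightarrow> real) \<Rightarrow> nat \<Rightarrow> (node \<Rightarrow> real) \<Rightarrow> real" where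
  "Ck K b k \<theta> = b k * ln (\<Sum>z\<in>level_nodes K k. exp (\<theta> z / b k))"

definition Ctilde :: "nat \<Rightarrow> (nat \<Rightarrow> real) \<Rightarrow> (node \<Rightarrow> real) \<Rightarrow> real" where
  "Ctilde K b \<theta> = (\<Sum>k\<le>K. Ck K b k \<theta>)"

definition Amat :: "nat \<Rightarrow> (nat \<Rightarrow> real) \<Rightarrow> node \<Rightarrow> node \<Rightarrow> real" where
  "Amat K b z y =
     (if z = y then Bsum K b (level z)
      else if interval z \<subset> interval y then - b (level z) else 0)"

definition shift :: "nat \<Rightarrow> (nat \<Rightarrow> real) \<Rightarrow> (node \<Rightarrow> real) \<Rightarrow> (node \<Rightarrow> real) \<Rightarrow> node \<Rightarrow> real" where
  "shift K b \<theta> \<eta> z = \<theta> z + (\<Sum>y\<in>inner_nodes K. Amat K b z y * \<eta> y)"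

definition Atrans :: "nat \<Rightarrow> (nat \<Rightarrow> real) \<Rightarrow> (node \<Rightarrow> real) \<Rightarrow> node \<Rightarrow> real" where
  "Atrans K b p y = (\<Sum>z\<in>nodes K. Amat K b z y * p z)"

definition is_gradient :: "node set \<Rightarrow> ((node \<Rightarrow> real) \<Rightarrow> real) \<Rightarrow> (node \<Rightarrow> real) \<Rightarrow> (node \<Rightarrow> real) \<Rightarrow> bool" where
  "is_gradient S f x p \<longleftrightarrow>
     (\<forall>z\<in>S. ((\<lambda>t. f (x(z := x z + t))) has_real_derivative p z) (at 0))"

text \<open>Membership in the coherent price space M = conv{phi(omega) : omega in Omega}
  (convex hull of a finite set written out as convex combinations).\<close>
definition in_coherent_space :: "nat \<Rightarrow> (node \<Rightarrow> real) \<Rightarrow> bool" where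
  "in_coherent_space K p \<longleftrightarrow>
     (\<exists>\<mu> :: real \<Rightarrow> real. (\<forall>\<omega>\<in>outcomes K. \<mu> \<omega> \<ge> 0) \<and> (\<Sum>\<omega>\<in>outcomes K. \<mu> \<omega>) = 1 \<and>
        (\<forall>z\<in>nodes K. p z = (\<Sum>\<omega>\<in>outcomes K. \<mu> \<omega> * phi z \<omega>)))"

end

theory Submission
  imports Defs
begin

text \<open>At the minimiser the directional derivative of the direct-sum cost along every column of
  \<open>A\<close> vanishes, which is \<open>A\<^sup>T p = 0\<close>.  Written out at an inner node \<open>(l,j)\<close> this reads
  \<open>B\<^sub>l p(l,j) = \<Sum>\<^sub>k b\<^sub>k P\<^sub>k\<close> (summed over the levels \<open>k > l\<close>), where \<open>P\<^sub>k\<close> is the total price of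
  the level-\<open>k\<close> descendants of \<open>(l,j)\<close>.  Working from the leaves up to the root, every price is
  therefore the sum of the prices of the node's leaf descendants.  The leaf prices form a softmax distribution on \<open>\<Omega>\<close>, and this
  distribution represents \<open>p\<close> as a convex combination of the payoff vectors \<open>\<phi>(\<omega>)\<close>.\<close>

lemma nodes_eq_Sigma: "nodes K = Sigma {..K} (\<lambda>k. {..<2^k})"
  by (auto simp: nodes_def)

lemma finite_nodes: "finite (nodes K)"
  by (simp add: nodes_eq_Sigma)

lemma sum_nodes: "(\<Sum>z\<in>nodes K. f z) = (\<Sum>k\<le>K. \<Sum>i<2^k. f (k,i))"
  by (simp add: nodes_eq_Sigma sum.Sigma)

lemma sum_level_nodes:
  assumes "k \<le> K"
  shows "(\<Sum>z\<in>level_nodes K k. f z) = (\<Sum>i<2^k. f (k,i))"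
proof -
  have "level_nodes K k = Pair k ` {..<2^k}"
    using assms by (auto simp: level_nodes_def nodes_def level_def)
  then show ?thesis
    by (simp add: sum.reindex inj_on_def)
qed

lemma sum_outcomes: "(\<Sum>\<omega>\<in>outcomes K. g \<omega>) = (\<Sum>i<2^K. g (real i / 2^K))"
proof -
  have "outcomes K = (\<lambda>i. real i / 2^K) ` {..<2^K}"
    by (auto simp: outcomes_def)
  then show ?thesis
    by (simp add: sum.reindex inj_on_def)
qed

subsection \<open>Dyadic intervals\<close>

lemma dyadic_le_dyadic_iff:
  assumes "l \<le> k"
  shows "real a / 2^l \<le> real c / 2^k \<longleftrightarrow> a * 2^(k-l) \<le> c"
proof -
  obtain d where "k = l + d"
    using assms le_Suc_ex by blast
  then have "real a / 2^l \<le> real c / 2^k \<longleftrightarrow> real a * 2^(k-l) \<le> real c"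
    by (simp add: power_add field_simps)
  also have "\<dots> \<longleftrightarrow> a * 2^(k-l) \<le> c"
    by (metis of_nat_le_iff of_nat_mult of_nat_numeral of_nat_power)
  finally show ?thesis .
qed

lemma dyadic_ge_dyadic_iff:
  assumes "l \<le> k"
  shows "real c / 2^k \<le> real a / 2^l \<longleftrightarrow> c \<le> a * 2^(k-l)"
proof -
  obtain d where "k = l + d"
    using assms le_Suc_ex by blast
  then have "real c / 2^k \<le> real a / 2^l \<longleftrightarrow> real c \<le> real a * 2^(k-l)"
    by (simp add: power_add field_simps)
  also have "\<dots> \<longleftrightarrow> c \<le> a * 2^(k-l)"
    by (metis of_nat_le_iff of_nat_mult of_nat_numeral of_nat_power)
  finally show ?thesis .
qed

definition descendants :: "nat \<Rightarrow> nat \<Rightarrow> nat \<Rightarrow> nat set" where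
  "descendants l j k = {j * 2^(k-l) ..< (j+1) * 2^(k-l)}"

lemma descendants_self [simp]: "descendants l j l = {j}"
  by (auto simp: descendants_def)

lemma descendants_subset:
  assumes "j < 2^l" "l \<le> k"
  shows "descendants l j k \<subseteq> {..<2^k}"
proof -
  have "(j+1) * 2^(k-l) \<le> (2::nat)^l * 2^(k-l)"
    using assms(1) by (intro mult_right_mono) auto
  also have "\<dots> = 2^k"
    using assms(2) by (simp flip: power_add)
  finally show ?thesis
    by (auto simp: descendants_def)
qed

lemma sum_descendants_split:
  assumes "l < k"
  shows "(\<Sum>i\<in>descendants l j k. f i)
       = (\<Sum>i\<in>descendants (Suc l) (2*j) k. f i) + (\<Sum>i\<in>descendants (Suc l) (2*j+1) k. f i)"
proof -
  define m where "m = (2::nat)^(k - Suc l)"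
  have "(2::nat)^(k-l) = 2*m"
    using assms by (simp add: m_def Suc_diff_Suc flip: power_Suc)
  then show ?thesis
    unfolding descendants_def m_def[symmetric]
    by (simp add: algebra_simps sum.atLeastLessThan_concat)
qed

lemma sum_descendants_eq_sum_if:
  assumes "j < 2^l" "l \<le> k"
  shows "(\<Sum>i<2^k. if i \<in> descendants l j k then f i else 0) = (\<Sum>i\<in>descendants l j k. f i)"
  using descendants_subset[OF assms] by (simp add: sum.If_cases Int_absorb1)

lemma interval_subset_iff:
  "interval (k,i) \<subseteq> interval (l,j) \<longleftrightarrow> l \<le> k \<and> i \<in> descendants l j k"
proof -
  have nonempty: "alpha (k,i) < beta (k,i)"
    by (simp add: alpha_def beta_def divide_strict_right_mono)
  have "interval (k,i) \<subseteq> interval (l,j) \<longleftrightarrow> alpha (l,j) \<le> alpha (k,i) \<and> beta (k,i) \<le> beta (l,j)"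
    using nonempty by (auto simp: interval_def)
  also have "\<dots> \<longleftrightarrow> l \<le> k \<and> i \<in> descendants l j k"
  proof
    assume ends: "alpha (l,j) \<le> alpha (k,i) \<and> beta (k,i) \<le> beta (l,j)"
    have "1 / 2^k = beta (k,i) - alpha (k,i)" "beta (l,j) - alpha (l,j) = 1 / (2::real)^l"
      by (simp_all add: alpha_def beta_def field_simps)
    with ends have "1 / (2::real)^k \<le> 1 / 2^l"
      by linarith
    then have "l \<le> k"
      by (simp add: divide_le_eq_1 field_simps)
    moreover have "real (Suc i) / 2^k \<le> real (Suc j) / 2^l"
      using ends by (simp add: beta_def add.commute)
    ultimately show "l \<le> k \<and> i \<in> descendants l j k"
      using ends by (simp add: alpha_def descendants_def dyadic_le_dyadic_iff dyadic_ge_dyadic_iff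
          Suc_le_eq del: of_nat_Suc)
  next
    assume "l \<le> k \<and> i \<in> descendants l j k"
    then show "alpha (l,j) \<le> alpha (k,i) \<and> beta (k,i) \<le> beta (l,j)"
      using dyadic_ge_dyadic_iff[of l k "Suc i" "Suc j"]
      by (simp add: alpha_def beta_def descendants_def dyadic_le_dyadic_iff Suc_le_eq add.commute)
  qed
  finally show ?thesis .
qed

lemma interval_psubset_iff:
  "interval (k,i) \<subset> interval (l,j) \<longleftrightarrow> l < k \<and> i \<in> descendants l j k"
  by (auto simp: less_le_not_le interval_subset_iff descendants_def)

lemma phi_outcome:
  assumes "l \<le> K"
  shows "phi (l,j) (real i / 2^K) = (if i \<in> descendants l j K then 1 else 0)"
proof -
  have "real i / 2^K < (real j + 1) / 2^l \<longleftrightarrow> i < (j+1) * 2^(K-l)"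
    using dyadic_le_dyadic_iff[OF assms, of "Suc j" i] by (simp add: not_le[symmetric] add.commute)
  then show ?thesis
    using assms by (simp add: phi_def interval_def alpha_def beta_def descendants_def
        dyadic_le_dyadic_iff)
qed

subsection \<open>The constraint matrix\<close>

lemma Amat_eq:
  "Amat K b (k,i) (l,j) = (if (k,i) = (l,j) then Bsum K b l else 0)
     - (if l < k \<and> i \<in> descendants l j k then b k else 0)"
  by (auto simp: Amat_def interval_psubset_iff level_def)

lemma Atrans_eq:
  assumes "l \<le> K" "j < 2^l"
  shows "Atrans K b p (l,j)
       = Bsum K b l * p (l,j) - (\<Sum>k\<in>{l+1..K}. b k * (\<Sum>i\<in>descendants l j k. p (k,i)))"
proof -
  have diagonal: "(\<Sum>z\<in>nodes K. (if z = (l,j) then Bsum K b l else 0) * p z) = Bsum K b l * p (l,j)"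
  proof -
    have "(l,j) \<in> nodes K"
      using assms by (simp add: nodes_def)
    then show ?thesis
      using finite_nodes by (simp add: if_distrib[where f = "\<lambda>c. c * _"] sum.delta' cong: if_cong)
  qed
  have "(\<Sum>k\<le>K. \<Sum>i<2^k. (if l < k \<and> i \<in> descendants l j k then b k else 0) * p (k,i))
      = (\<Sum>k\<le>K. if l < k then b k * (\<Sum>i\<in>descendants l j k. p (k,i)) else 0)"
    using assms(2) by (intro sum.cong refl)
      (auto simp: sum_distrib_left sum_descendants_eq_sum_if[symmetric] intro: sum.cong)
  also have "\<dots> = (\<Sum>k\<in>{l+1..K}. b k * (\<Sum>i\<in>descendants l j k. p (k,i)))"
    by (simp add: sum.If_cases Int_def atLeastAtMost_def Suc_le_eq conj_commute)
  finally have off_diagonal: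
    "(\<Sum>z\<in>nodes K. (if l < fst z \<and> snd z \<in> descendants l j (fst z) then b (fst z) else 0) * p z)
      = (\<Sum>k\<in>{l+1..K}. b k * (\<Sum>i\<in>descendants l j k. p (k,i)))"
    by (simp add: sum_nodes cong: if_cong)
  show ?thesis
    unfolding Atrans_def diagonal[symmetric] off_diagonal[symmetric] sum_subtractf[symmetric]
    by (intro sum.cong refl) (auto simp: Amat_eq left_diff_distrib split: if_splits)
qed

lemma Bsum_pos: "\<forall>k\<le>K. b k > 0 \<Longrightarrow> l < K \<Longrightarrow> Bsum K b l > 0"
  unfolding Bsum_def by (rule sum_pos) auto

text \<open>Induction from the leaf level upwards: by the induction hypothesis all descendant sums
  below \<open>(l,j)\<close> equal the total price of its two children, so \<open>A\<^sup>T p = 0\<close> at \<open>(l,j)\<close> says that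
  \<open>B\<^sub>l > 0\<close> times the difference of the two is zero.\<close>

lemma sum_descendants_eq_if_Atrans_zero:
  assumes b: "\<forall>k\<le>K. b k > 0"
    and A0: "\<forall>y\<in>inner_nodes K. Atrans K b p y = 0"
    and "l \<le> k" "k \<le> K" "j < 2^l"
  shows "(\<Sum>i\<in>descendants l j k. p (k,i)) = p (l,j)"
proof -
  have "l \<le> K"
    using assms by linarith
  then show ?thesis
    using assms(3-5)
  proof (induction l arbitrary: j k rule: inc_induct)
    case base
    then show ?case
      by simp
  next
    case (step n)
    define children where "children = p (Suc n, 2*j) + p (Suc n, 2*j+1)"
    have below: "(\<Sum>i\<in>descendants n j k'. p (k',i)) = children" if "k' \<in> {n+1..K}" for k'
      using that step.prems(3) sum_descendants_split[of n k' "\<lambda>i. p (k',i)" j]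
      by (simp add: children_def step.IH)
    have "(n,j) \<in> inner_nodes K"
      using step.hyps step.prems(3) by (auto simp: inner_nodes_def level_nodes_def nodes_def level_def)
    then have "0 = Bsum K b n * p (n,j) - (\<Sum>k'\<in>{n+1..K}. b k' * (\<Sum>i\<in>descendants n j k'. p (k',i)))"
      using A0 Atrans_eq[of n K j b p] step.hyps step.prems(3) by simp
    also have "\<dots> = Bsum K b n * p (n,j) - (\<Sum>k'\<in>{n+1..K}. b k' * children)"
      using below by simp
    also have "\<dots> = Bsum K b n * (p (n,j) - children)"
      by (simp add: Bsum_def sum_distrib_right right_diff_distrib)
    finally have "p (n,j) = children"
      using Bsum_pos[OF b step.hyps(2)] by simp
    then show ?case
      using step.prems below by (cases "k = n") auto
  qed
qed

text \<open>The leaf prices serve as the weights of the convex combination.\<close>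

lemma in_coherent_space_if_Atrans_zero:
  assumes b: "\<forall>k\<le>K. b k > 0"
    and A0: "\<forall>y\<in>inner_nodes K. Atrans K b p y = 0"
    and nonneg: "\<forall>i<2^K. p (K,i) \<ge> 0"
    and total: "(\<Sum>i<2^K. p (K,i)) = 1"
  shows "in_coherent_space K p"
proof -
  define \<mu> where "\<mu> \<omega> = p (K, nat \<lfloor>\<omega> * 2^K\<rfloor>)" for \<omega> :: real
  have \<mu>_outcome: "\<mu> (real i / 2^K) = p (K,i)" for i
    by (simp add: \<mu>_def)
  have "p z = (\<Sum>\<omega>\<in>outcomes K. \<mu> \<omega> * phi z \<omega>)" if z_node: "z \<in> nodes K" for z
  proof -
    obtain l j where z: "z = (l,j)" and l: "l \<le> K" and j: "j < 2^l"
      using z_node by (auto simp: nodes_def)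
    have "(\<Sum>\<omega>\<in>outcomes K. \<mu> \<omega> * phi z \<omega>)
        = (\<Sum>i<2^K. if i \<in> descendants l j K then p (K,i) else 0)"
      using l by (simp add: z sum_outcomes \<mu>_outcome phi_outcome if_distrib cong: if_cong)
    also have "\<dots> = p (l,j)"
      using sum_descendants_eq_if_Atrans_zero[OF b A0 l order_refl j] j l
      by (simp add: sum_descendants_eq_sum_if)
    finally show ?thesis
      by (simp add: z)
  qed
  moreover have "\<forall>\<omega>\<in>outcomes K. \<mu> \<omega> \<ge> 0"
    using nonneg by (auto simp: outcomes_def \<mu>_outcome)
  moreover have "(\<Sum>\<omega>\<in>outcomes K. \<mu> \<omega>) = 1"
    using total by (simp add: sum_outcomes \<mu>_outcome)
  ultimately show ?thesis
    unfolding in_coherent_space_def by blast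
qed

subsection \<open>Prices of the direct-sum cost\<close>

definition partition_function :: "nat \<Rightarrow> (nat \<Rightarrow> real) \<Rightarrow> (node \<Rightarrow> real) \<Rightarrow> nat \<Rightarrow> real" where
  "partition_function K b x k = (\<Sum>z\<in>level_nodes K k. exp (x z / b k))"

definition lmsr_price :: "nat \<Rightarrow> (nat \<Rightarrow> real) \<Rightarrow> (node \<Rightarrow> real) \<Rightarrow> node \<Rightarrow> real" where
  "lmsr_price K b x z = exp (x z / b (level z)) / partition_function K b x (level z)"

lemma partition_function_pos: "k \<le> K \<Longrightarrow> partition_function K b x k > 0"
  by (simp add: partition_function_def sum_level_nodes sum_pos lessThan_empty_iff)

lemma lmsr_price_nonneg: "lmsr_price K b x z \<ge> 0"
  by (simp add: lmsr_price_def partition_function_def sum_nonneg)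

lemma sum_lmsr_price_level:
  assumes "k \<le> K"
  shows "(\<Sum>i<2^k. lmsr_price K b x (k,i)) = 1"
proof -
  have "(\<Sum>i<2^k. lmsr_price K b x (k,i)) = (\<Sum>i<2^k. exp (x (k,i) / b k)) / partition_function K b x k"
    by (simp add: lmsr_price_def level_def sum_divide_distrib)
  also have "\<dots> = 1"
    using partition_function_pos[OF assms, of b x] assms
    by (simp add: partition_function_def sum_level_nodes)
  finally show ?thesis .
qed

lemma Ck_has_real_derivative_along:
  assumes "b k > 0" "k \<le> K"
  shows "((\<lambda>t. Ck K b k (\<lambda>z. x z + t * c z)) has_real_derivative
           (\<Sum>z\<in>level_nodes K k. c z * lmsr_price K b x z)) (at 0)"
proof -
  let ?F = "\<lambda>t. \<Sum>z\<in>level_nodes K k. exp ((x z + t * c z) / b k)"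
  let ?D = "\<Sum>z\<in>level_nodes K k. exp (x z / b k) * (c z / b k)"
  have deriv: "(?F has_real_derivative ?D) (at 0)"
    using assms(1) by (intro DERIV_sum) (auto intro!: derivative_eq_intros)
  have F0: "?F 0 = partition_function K b x k"
    by (simp add: partition_function_def)
  have "0 < ?F 0"
    unfolding F0 using assms(2) by (rule partition_function_pos)
  from DERIV_cmult[OF DERIV_chain2[OF DERIV_ln_divide[OF this] deriv]]
  have "((\<lambda>t. b k * ln (?F t)) has_real_derivative b k * (1 / partition_function K b x k * ?D)) (at 0)"
    unfolding F0 .
  then have "((\<lambda>t. Ck K b k (\<lambda>z. x z + t * c z)) has_real_derivative
           b k * (?D / partition_function K b x k)) (at 0)"
    by (simp add: Ck_def)
  also have "b k * (?D / partition_function K b x k)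
      = (\<Sum>z\<in>level_nodes K k. c z * lmsr_price K b x z)"
    using assms(1) by (auto simp: lmsr_price_def level_nodes_def sum_divide_distrib sum_distrib_left
        intro!: sum.cong)
  finally show ?thesis .
qed
lemma Ctilde_has_real_derivative_along:
  assumes "\<forall>k\<le>K. b k > 0"
  shows "((\<lambda>t. Ctilde K b (\<lambda>z. x z + t * c z)) has_real_derivative
           (\<Sum>z\<in>nodes K. c z * lmsr_price K b x z)) (at 0)"
proof -
  have "((\<lambda>t. Ctilde K b (\<lambda>z. x z + t * c z)) has_real_derivative
           (\<Sum>k\<le>K. \<Sum>z\<in>level_nodes K k. c z * lmsr_price K b x z)) (at 0)"
    unfolding Ctilde_def using assms by (intro DERIV_sum Ck_has_real_derivative_along) auto
  also have "(\<Sum>k\<le>K. \<Sum>z\<in>level_nodes K k. c z * lmsr_price K b x z)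
      = (\<Sum>z\<in>nodes K. c z * lmsr_price K b x z)"
    by (simp add: sum_nodes sum_level_nodes)
  finally show ?thesis .
qed

lemma is_gradient_Ctilde_imp_lmsr_price:
  assumes "\<forall>k\<le>K. b k > 0"
    and "is_gradient (nodes K) (Ctilde K b) x p"
    and "z \<in> nodes K"
  shows "p z = lmsr_price K b x z"
proof -
  have "x(z := x z + t) = (\<lambda>w. x w + t * (if w = z then 1 else 0))" for t
    by auto
  then have "((\<lambda>t. Ctilde K b (x(z := x z + t))) has_real_derivative
      (\<Sum>w\<in>nodes K. (if w = z then 1 else 0) * lmsr_price K b x w)) (at 0)"
    using Ctilde_has_real_derivative_along[OF assms(1)] by presburger
  also have "(\<Sum>w\<in>nodes K. (if w = z then 1 else 0) * lmsr_price K b x w) = lmsr_price K b x z"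
    using assms(3) finite_nodes by (simp add: if_distrib[where f = "\<lambda>c. c * _"] sum.delta' cong: if_cong)
  finally have "((\<lambda>t. Ctilde K b (x(z := x z + t))) has_real_derivative lmsr_price K b x z) (at 0)" .
  moreover have "((\<lambda>t. Ctilde K b (x(z := x z + t))) has_real_derivative p z) (at 0)"
    using assms(2,3) by (simp add: is_gradient_def)
  ultimately show ?thesis
    using DERIV_unique by blast
qed

lemma shift_update:
  assumes "y \<in> inner_nodes K"
  shows "shift K b \<theta> (\<eta>(y := \<eta> y + t)) = (\<lambda>z. shift K b \<theta> \<eta> z + t * Amat K b z y)"
proof
  fix z
  have "finite (inner_nodes K)"
    using finite_nodes by (simp add: inner_nodes_def)
  then have "(\<Sum>y'\<in>inner_nodes K. Amat K b z y' * (\<eta>(y := \<eta> y + t)) y')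
      = (\<Sum>y'\<in>inner_nodes K. Amat K b z y' * \<eta> y') + Amat K b z y * t"
    using assms by (simp add: sum.remove algebra_simps)
  then show "shift K b \<theta> (\<eta>(y := \<eta> y + t)) z = shift K b \<theta> \<eta> z + t * Amat K b z y"
    by (simp add: shift_def algebra_simps)
qed

text \<open>The derivative of \<open>\<eta> \<mapsto> C\<tilde>(\<theta> + A\<eta>)\<close> in the direction of the \<open>y\<close>-th unit vector is
  \<open>(A\<^sup>T p) y\<close>, and it vanishes at a minimum (Fermat's rule).\<close>

lemma Atrans_zero_at_minimum:
  assumes b: "\<forall>k\<le>K. b k > 0"
    and min: "\<forall>\<eta>. Ctilde K b (shift K b \<theta> \<eta>s) \<le> Ctilde K b (shift K b \<theta> \<eta>)"
    and grad: "is_gradient (nodes K) (Ctilde K b) (shift K b \<theta> \<eta>s) p"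
    and y: "y \<in> inner_nodes K"
  shows "Atrans K b p y = 0"
proof -
  let ?x = "shift K b \<theta> \<eta>s"
  let ?f = "\<lambda>t. Ctilde K b (shift K b \<theta> (\<eta>s(y := \<eta>s y + t)))"
  have "((\<lambda>t. Ctilde K b (\<lambda>z. ?x z + t * Amat K b z y)) has_real_derivative
      (\<Sum>z\<in>nodes K. Amat K b z y * lmsr_price K b ?x z)) (at 0)"
    by (rule Ctilde_has_real_derivative_along[OF b])
  also have "(\<Sum>z\<in>nodes K. Amat K b z y * lmsr_price K b ?x z) = Atrans K b p y"
    unfolding Atrans_def using is_gradient_Ctilde_imp_lmsr_price[OF b grad] by simp
  finally have "(?f has_real_derivative Atrans K b p y) (at 0)"
    unfolding shift_update[OF y] .
  moreover have "\<forall>t. \<bar>0 - t\<bar> < 1 \<longrightarrow> ?f 0 \<le> ?f t"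
    using min by simp
  ultimately show ?thesis
    by (intro DERIV_local_min[of ?f _ 0 1]) auto
qed

theorem theorem3:
  fixes K :: nat and b :: "nat \<Rightarrow> real"
    and \<theta> \<eta>s p :: "node \<Rightarrow> real"
  assumes "K \<ge> 1"
    and "\<forall>k\<le>K. b k > 0"
    and "\<forall>\<eta>. Ctilde K b (shift K b \<theta> \<eta>s) \<le> Ctilde K b (shift K b \<theta> \<eta>)"
    and "is_gradient (nodes K) (Ctilde K b) (shift K b \<theta> \<eta>s) p"
  shows "(\<forall>y\<in>inner_nodes K. Atrans K b p y = 0) \<and> in_coherent_space K p"
proof -
  have A0: "\<forall>y\<in>inner_nodes K. Atrans K b p y = 0"
    using Atrans_zero_at_minimum[OF assms(2-4)] by blast
  have leaf: "p (K,i) = lmsr_price K b (shift K b \<theta> \<eta>s) (K,i)" if "i < 2^K" for i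
    using is_gradient_Ctilde_imp_lmsr_price[OF assms(2,4)] that by (simp add: nodes_def)
  have "in_coherent_space K p"
    using sum_lmsr_price_level[of K K b "shift K b \<theta> \<eta>s"]
    by (intro in_coherent_space_if_Atrans_zero[OF assms(2) A0]) (simp_all add: leaf lmsr_price_nonneg)
  with A0 show ?thesis ..
qed

end
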